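(* Let $\mathcal{X}$ be a finite set, $\mathcal{Y}$ a set with two elements, and $(X,Y)$ random variables on $\mathcal{X}\times\mathcal{Y}$ with joint distribution $P_{X,Y}$ which are not independent, so that $P_{X,Y}(x,y) = P_X(x)P_Y(y)\left(1+\varrho f^*(x)g^*(y)\right)$ for some $\varrho>0$, $f^*\in\mathcal{F}_{\mathcal{X}}$, $g^*:\mathcal{Y}\to\mathbb{R}$ with $\mathbb{E}[f^*(X)^2]=\mathbb{E}[g^*(Y)^2]=1$. Then for each (nonzero, finite-dimensional) subspace $\mathcal{G}$ of $\mathcal{F}_{\mathcal{X}}$, $$\mathrm{H}(\mathcal{G}) = \frac{\varrho^2}{2}\left\|\Pi(f^*;\mathcal{G})\right\|^2 = \max_{f\in\mathcal{G}}\mathrm{H}(f) = \mathrm{H}(\Pi(f^*;\mathcal{G})),$$ where the maximum is over (nonzero) one-dimensional features $f\in\mathcal{G}$.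
   Context: $\mathcal{F}_{\mathcal{X}}$ is the space of functions $\mathcal{X}\to\mathbb{R}$ with inner product $\langle f_1,f_2\rangle=\mathbb{E}_{P_X}[f_1(X)f_2(X)]$ and norm $\|f\|=\sqrt{\langle f,f\rangle}$; $\Pi(f;\mathcal{G}) = \arg\min_{h\in\mathcal{G}}\|h-f\|$. For $f:\mathcal{X}\to\mathbb{R}^d$, $\Lambda_f = \mathbb{E}[f(X)f^{\mathrm{T}}(X)]$, $\tilde f(x)=f(x)-\mathbb{E}[f(X)]$, and the H-score (for nonsingular $\Lambda_f$) is $\mathrm{H}(f) = \frac12\mathbb{E}\left[\left\|\mathbb{E}[\Lambda_f^{-1/2}\tilde f(X)\mid Y]\right\|^2\right]$. For a subspace $\mathcal{G}$, $\mathrm{H}(\mathcal{G})$ denotes $\mathrm{H}(f)$ for any $f$ whose components form a basis of $\mathcal{G}$; this does not depend on the choice of basis. *)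

theory Defs
  imports "HOL-Analysis.Analysis" "Jordan_Normal_Form.Gauss_Jordan_Elimination" "HOL-Library.Function_Algebras"
begin

definition margX :: "('x::finite \<Rightarrow> 'y::finite \<Rightarrow> real) \<Rightarrow> 'x \<Rightarrow> real" where
  "margX P x = (\<Sum>y\<in>UNIV. P x y)"

definition margY :: "('x::finite \<Rightarrow> 'y::finite \<Rightarrow> real) \<Rightarrow> 'y \<Rightarrow> real" where
  "margY P y = (\<Sum>x\<in>UNIV. P x y)"

definition ExpX :: "('x::finite \<Rightarrow> 'y::finite \<Rightarrow> real) \<Rightarrow> ('x \<Rightarrow> real) \<Rightarrow> real" where
  "ExpX P f = (\<Sum>x\<in>UNIV. margX P x * f x)"

definition ExpY :: "('x::finite \<Rightarrow> 'y::finite \<Rightarrow> real) \<Rightarrow> ('y \<Rightarrow> real) \<Rightarrow> real" where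
  "ExpY P g = (\<Sum>y\<in>UNIV. margY P y * g y)"

definition condE :: "('x::finite \<Rightarrow> 'y::finite \<Rightarrow> real) \<Rightarrow> ('x \<Rightarrow> real) \<Rightarrow> 'y \<Rightarrow> real" where
  "condE P f y = (\<Sum>x\<in>UNIV. P x y * f x) / margY P y"

definition innerP :: "('x::finite \<Rightarrow> 'y::finite \<Rightarrow> real) \<Rightarrow> ('x \<Rightarrow> real) \<Rightarrow> ('x \<Rightarrow> real) \<Rightarrow> real" where
  "innerP P f1 f2 = ExpX P (\<lambda>x. f1 x * f2 x)"

definition normP :: "('x::finite \<Rightarrow> 'y::finite \<Rightarrow> real) \<Rightarrow> ('x \<Rightarrow> real) \<Rightarrow> real" where
  "normP P f = sqrt (innerP P f f)"

definition projP :: "('x::finite \<Rightarrow> 'y::finite \<Rightarrow> real) \<Rightarrow> ('x \<Rightarrow> real) \<Rightarrow> ('x \<Rightarrow> real) set \<Rightarrow> ('x \<Rightarrow> real)" where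
  "projP P f G = (THE h. h \<in> G \<and> (\<forall>h'\<in>G. normP P (h - f) \<le> normP P (h' - f)))"

text \<open>A d-dimensional feature f = (f_1,...,f_d) is represented by the list of its components.
  Lambda_f = E[f(X) f(X)^T].\<close>
definition LambdaF :: "('x::finite \<Rightarrow> 'y::finite \<Rightarrow> real) \<Rightarrow> ('x \<Rightarrow> real) list \<Rightarrow> real mat" where
  "LambdaF P fs = mat (length fs) (length fs) (\<lambda>(i,j). ExpX P (\<lambda>x. (fs ! i) x * (fs ! j) x))"

text \<open>Inverse of Lambda_f (the zero matrix if singular; only used when nonsingular).\<close>
definition LambdaInv :: "('x::finite \<Rightarrow> 'y::finite \<Rightarrow> real) \<Rightarrow> ('x \<Rightarrow> real) list \<Rightarrow> real mat" where
  "LambdaInv P fs = (case mat_inverse (LambdaF P fs) of Some B \<Rightarrow> B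
                       | None \<Rightarrow> 0\<^sub>m (length fs) (length fs))"

definition condMean :: "('x::finite \<Rightarrow> 'y::finite \<Rightarrow> real) \<Rightarrow> ('x \<Rightarrow> real) list \<Rightarrow> 'y \<Rightarrow> real vec" where
  "condMean P fs y = vec (length fs) (\<lambda>i. condE P (\<lambda>x. (fs ! i) x - ExpX P (fs ! i)) y)"

text \<open>H-score: H(f) = 1/2 E[ || E[Lambda_f^(-1/2) f~(X) | Y] ||^2 ]
  = 1/2 E[ m(Y)^T Lambda_f^(-1) m(Y) ] with m(Y) = E[f~(X)|Y]
  (since Lambda_f^(-1/2) is symmetric with square Lambda_f^(-1)).\<close>
definition Hscore :: "('x::finite \<Rightarrow> 'y::finite \<Rightarrow> real) \<Rightarrow> ('x \<Rightarrow> real) list \<Rightarrow> real" where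
  "Hscore P fs = 1/2 * ExpY P (\<lambda>y. condMean P fs y \<bullet> (LambdaInv P fs *\<^sub>v condMean P fs y))"

text \<open>F_X as a real vector space: pointwise scaling (addition/zero from Function_Algebras).\<close>
definition scaleF :: "real \<Rightarrow> ('x \<Rightarrow> real) \<Rightarrow> ('x \<Rightarrow> real)" where
  "scaleF c f = (\<lambda>x. c * f x)"

abbreviation subspaceF :: "('x \<Rightarrow> real) set \<Rightarrow> bool" where
  "subspaceF \<equiv> module.subspace scaleF"

abbreviation spanF :: "('x \<Rightarrow> real) set \<Rightarrow> ('x \<Rightarrow> real) set" where
  "spanF \<equiv> module.span scaleF"

abbreviation independentF :: "('x \<Rightarrow> real) set \<Rightarrow> bool" where
  "independentF S \<equiv> \<not> module.dependent scaleF S"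

definition HscoreSub :: "('x::finite \<Rightarrow> 'y::finite \<Rightarrow> real) \<Rightarrow> ('x \<Rightarrow> real) set \<Rightarrow> real" where
  "HscoreSub P G = Hscore P (SOME bs. distinct bs \<and> independentF (set bs) \<and> spanF (set bs) = G)"

end

theory Submission
  imports Defs "Jordan_Normal_Form.Determinant"
begin

(*
  In the rank-one model E[f(X) - E f(X) | Y = y] = rho g*(y) <f*, f>, so with a = (<f*, f_i>)_i the
  H-score of a feature f = (f_1, ..., f_d) is rho^2/2 a^T Lambda_f^-1 a. When f is a basis of G,
  Lambda_f^-1 a solves the normal equations, i.e. it holds the coordinates of the orthogonal
  projection h of f* onto G, and a^T Lambda_f^-1 a = ||h||^2. For a single feature f in G we have
  <f*, f> = <h, f>, hence H(f) = rho^2/2 <h, f>^2 / ||f||^2 <= rho^2/2 ||h||^2 by Cauchy-Schwarz,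
  with equality at f = h (and at every f if h = 0).
  Only the positivity of P_X, the product form of P and E[g*(Y)^2] = 1 are needed; the other
  hypotheses just make the model a genuine modal decomposition.
*)

lemma innerP_eq_sum: "innerP P f g = (\<Sum>x\<in>UNIV. margX P x * (f x * g x))"
  by (simp add: innerP_def ExpX_def)

lemma innerP_commute: "innerP P f g = innerP P g f"
  by (simp add: innerP_eq_sum mult.commute)

lemma innerP_add_left: "innerP P (f + g) k = innerP P f k + innerP P g k"
  by (simp add: innerP_eq_sum algebra_simps sum.distrib)

lemma innerP_diff_left: "innerP P (f - g) k = innerP P f k - innerP P g k"
  by (simp add: innerP_eq_sum algebra_simps sum_subtractf)

lemma innerP_scaleF_left: "innerP P (scaleF c f) k = c * innerP P f k"
  by (simp add: innerP_eq_sum scaleF_def sum_distrib_left algebra_simps)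

lemma innerP_zero_left [simp]: "innerP P 0 k = 0"
  by (simp add: innerP_eq_sum)

lemma innerP_sum_left: "innerP P (\<Sum>i\<in>I. F i) k = (\<Sum>i\<in>I. innerP P (F i) k)"
  by (induction I rule: infinite_finite_induct)
    (simp_all only: sum.infinite sum.empty sum.insert innerP_zero_left innerP_add_left simp_thms)

lemma innerP_self_nonneg:
  assumes "\<And>x. margX P x \<ge> 0"
  shows "innerP P f f \<ge> 0"
  unfolding innerP_eq_sum using assms by (intro sum_nonneg) simp

lemma innerP_self_eq_0_iff:
  assumes pos: "\<And>x. margX P x > 0"
  shows "innerP P f f = 0 \<longleftrightarrow> f = 0"
proof
  assume "innerP P f f = 0"
  then have terms: "\<forall>x\<in>UNIV. margX P x * (f x * f x) = 0"
    unfolding innerP_eq_sum by (subst sum_nonneg_eq_0_iff[symmetric]) (auto simp: pos less_imp_le)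
  show "f = 0"
  proof
    fix x
    show "f x = 0 x"
      using terms pos[of x] by (metis UNIV_I mult_eq_0_iff order_less_irrefl zero_fun_apply)
  qed
qed simp

lemma innerP_Cauchy_Schwarz:
  assumes pos: "\<And>x. margX P x > 0"
  shows "(innerP P u v)\<^sup>2 \<le> innerP P u u * innerP P v v"
proof (cases "v = 0")
  case True
  then show ?thesis
    by (simp add: innerP_commute[of P u 0])
next
  case False
  have nonneg: "innerP P w w \<ge> 0" for w
    using pos by (simp add: innerP_self_nonneg less_imp_le)
  have vv: "innerP P v v > 0"
    using False nonneg[of v] innerP_self_eq_0_iff[OF pos, of v] by linarith
  define w where "w = scaleF (innerP P v v) u - scaleF (innerP P u v) v"
  have "innerP P w w = innerP P v v * innerP P w u - innerP P u v * innerP P w v"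
    by (subst (1) w_def) (simp only: innerP_diff_left innerP_scaleF_left innerP_commute[of P _ w])
  also have "\<dots> = innerP P v v * (innerP P u u * innerP P v v - (innerP P u v)\<^sup>2)"
    unfolding w_def innerP_diff_left innerP_scaleF_left innerP_commute[of P v u]
    by (simp add: algebra_simps power2_eq_square)
  finally show ?thesis
    using nonneg[of w] vv by (simp add: zero_le_mult_iff)
qed

lemma innerP_add_self_orthogonal:
  assumes "innerP P u v = 0"
  shows "innerP P (u + v) (u + v) = innerP P u u + innerP P v v"
  using assms
  by (simp add: innerP_add_left innerP_commute[of P _ "u + v"] innerP_commute[of P v u])

interpretation F: vector_space "scaleF :: real \<Rightarrow> ('x \<Rightarrow> real) \<Rightarrow> 'x \<Rightarrow> real"
  by unfold_locales (auto simp: scaleF_def algebra_simps fun_eq_iff)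

lemma sum_fun_apply: "(\<Sum>i\<in>I. F i) x = (\<Sum>i\<in>I. (F i :: 'x \<Rightarrow> 'a::comm_monoid_add) x)"
  by (induction I rule: infinite_finite_induct) simp_all

lemma spanF_indicators: "spanF (range (\<lambda>a::'x::finite. \<lambda>x. if x = a then 1 else 0)) = UNIV"
proof -
  have "f = (\<Sum>a\<in>UNIV. scaleF (f a) (\<lambda>x. if x = a then 1 else 0))" for f :: "'x \<Rightarrow> real"
    by (rule ext) (simp add: sum_fun_apply scaleF_def if_distrib cong: if_cong)
  then show ?thesis
    by (metis (no_types, lifting) F.span_base F.span_scale F.span_sum UNIV_I equalityI rangeI subsetI)
qed

lemma subspaceF_has_basis_list:
  assumes "subspaceF (G :: ('x::finite \<Rightarrow> real) set)"
  shows "\<exists>bs. distinct bs \<and> independentF (set bs) \<and> spanF (set bs) = G"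
proof -
  obtain B where B: "B \<subseteq> G" "independentF B" "G \<subseteq> spanF B"
    using F.basis_exists by metis
  have "finite B"
    using F.independent_span_bound[OF _ B(2), of "range (\<lambda>a x. if x = a then 1 else 0)"]
    by (simp add: spanF_indicators)
  then obtain bs where "set bs = B" "distinct bs"
    using finite_distinct_list by blast
  then show ?thesis
    using B F.span_subspace[OF B(1,3) assms] by blast
qed

definition lincombF :: "real vec \<Rightarrow> ('x \<Rightarrow> real) list \<Rightarrow> 'x \<Rightarrow> real" where
  "lincombF c fs = (\<Sum>i<length fs. scaleF (c $ i) (fs ! i))"

definition innerP_vec ::
    "('x::finite \<Rightarrow> 'y::finite \<Rightarrow> real) \<Rightarrow> ('x \<Rightarrow> real) \<Rightarrow> ('x \<Rightarrow> real) list \<Rightarrow> real vec" where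
  "innerP_vec P g fs = vec (length fs) (\<lambda>i. innerP P g (fs ! i))"

lemma innerP_vec_carrier: "innerP_vec P g fs \<in> carrier_vec (length fs)"
  by (simp add: innerP_vec_def)

lemma lincombF_in_spanF: "lincombF c fs \<in> spanF (set fs)"
  unfolding lincombF_def by (intro F.span_sum F.span_scale F.span_base) simp

lemma independentF_lincombF_eq_0:
  fixes c :: "real vec"
  assumes "distinct fs" "independentF (set fs)" "lincombF c fs = 0" "i < length fs"
  shows "c $ i = 0"
proof -
  have bij: "bij_betw ((!) fs) {..<length fs} (set fs)"
    using bij_betw_nth[OF assms(1)] by simp
  define u where "u v = c $ inv_into {..<length fs} ((!) fs) v" for v
  have u: "u (fs ! k) = c $ k" if "k < length fs" for k
    using bij that by (simp add: u_def bij_betw_inv_into_left)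
  have "(\<Sum>v\<in>set fs. scaleF (u v) v) = (\<Sum>k<length fs. scaleF (u (fs ! k)) (fs ! k))"
    using sum.reindex_bij_betw[OF bij, of "\<lambda>v. scaleF (u v) v"] by simp
  also have "\<dots> = lincombF c fs"
    unfolding lincombF_def by (rule sum.cong) (simp_all add: u)
  finally have "u (fs ! i) = 0"
    using F.independentD[OF assms(2) finite_set order_refl] assms(3,4) by simp
  then show ?thesis
    using u assms(4) by simp
qed

lemma innerP_lincombF_left:
  "innerP P (lincombF c fs) k = (\<Sum>i<length fs. c $ i * innerP P (fs ! i) k)"
  by (simp add: lincombF_def innerP_sum_left innerP_scaleF_left)

lemma LambdaF_carrier: "LambdaF P fs \<in> carrier_mat (length fs) (length fs)"
  by (simp add: LambdaF_def)

lemma LambdaInv_carrier: "LambdaInv P fs \<in> carrier_mat (length fs) (length fs)"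
  unfolding LambdaInv_def
  by (cases "mat_inverse (LambdaF P fs)") (auto dest: mat_inverse(2)[OF LambdaF_carrier])

lemma LambdaF_mult_vec_nth:
  assumes "v \<in> carrier_vec (length fs)" "j < length fs"
  shows "(LambdaF P fs *\<^sub>v v) $ j = innerP P (fs ! j) (lincombF v fs)"
proof -
  have "(LambdaF P fs *\<^sub>v v) $ j = (\<Sum>k<length fs. innerP P (fs ! j) (fs ! k) * v $ k)"
    using assms by (simp add: LambdaF_def innerP_def scalar_prod_def lessThan_atLeast0)
  then show ?thesis
    by (simp add: innerP_commute[of P "fs ! j"] innerP_lincombF_left mult.commute)
qed

lemma innerP_lincombF_self:
  assumes v: "v \<in> carrier_vec (length fs)"
  shows "innerP P (lincombF v fs) (lincombF v fs) = v \<bullet> (LambdaF P fs *\<^sub>v v)"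
proof -
  have "innerP P (lincombF v fs) (lincombF v fs)
      = (\<Sum>i<length fs. v $ i * innerP P (fs ! i) (lincombF v fs))"
    by (rule innerP_lincombF_left)
  also have "\<dots> = (\<Sum>i<length fs. v $ i * (LambdaF P fs *\<^sub>v v) $ i)"
    using v by (simp add: LambdaF_mult_vec_nth)
  finally show ?thesis
    using LambdaF_carrier[of P fs] by (simp add: scalar_prod_def lessThan_atLeast0)
qed

lemma LambdaF_LambdaInv:
  assumes pos: "\<And>x. margX P x > 0" and "distinct fs" "independentF (set fs)"
  shows "LambdaF P fs * LambdaInv P fs = 1\<^sub>m (length fs)"
    and "LambdaInv P fs * LambdaF P fs = 1\<^sub>m (length fs)"
proof -
  let ?A = "LambdaF P fs" and ?n = "length fs"
  have "det ?A \<noteq> 0"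
  proof
    assume "det ?A = 0"
    then obtain v where v: "v \<in> carrier_vec ?n" "v \<noteq> 0\<^sub>v ?n" "?A *\<^sub>v v = 0\<^sub>v ?n"
      using det_0_iff_vec_prod_zero[OF LambdaF_carrier] by auto
    then have "innerP P (lincombF v fs) (lincombF v fs) = 0"
      by (simp add: innerP_lincombF_self)
    then have "lincombF v fs = 0"
      using innerP_self_eq_0_iff[OF pos] by blast
    then have "v = 0\<^sub>v ?n"
      using v(1) independentF_lincombF_eq_0[OF assms(2,3)] by auto
    with v(2) show False ..
  qed
  then obtain B where B: "mat_inverse ?A = Some B"
    using mat_inverse(1)[OF LambdaF_carrier] det_non_zero_imp_unit[OF LambdaF_carrier]
    by (metis option.exhaust)
  then show "?A * LambdaInv P fs = 1\<^sub>m ?n" "LambdaInv P fs * ?A = 1\<^sub>m ?n"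
    using mat_inverse(2)[OF LambdaF_carrier B] by (simp_all add: LambdaInv_def)
qed

lemma LambdaF_mult_LambdaInv_vec:
  assumes "\<And>x. margX P x > 0" "distinct fs" "independentF (set fs)"
    and a: "a \<in> carrier_vec (length fs)"
  shows "LambdaF P fs *\<^sub>v (LambdaInv P fs *\<^sub>v a) = a"
  using a
  by (simp add: assoc_mult_mat_vec[OF LambdaF_carrier LambdaInv_carrier a, symmetric]
      LambdaF_LambdaInv(1)[OF assms(1-3)])

lemma innerP_orthogonal_spanF:
  assumes "\<And>g. g \<in> S \<Longrightarrow> innerP P g k = 0" "g \<in> spanF S"
  shows "innerP P g k = 0"
proof -
  have "subspaceF {g. innerP P g k = 0}"
    by (rule F.subspaceI) (simp_all add: innerP_add_left innerP_scaleF_left)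
  then show ?thesis
    using F.span_minimal[of S "{g. innerP P g k = 0}"] assms by blast
qed

lemma projP_eqI:
  assumes pos: "\<And>x. margX P x > 0" and "subspaceF G" "h \<in> G"
    and orth: "\<And>g. g \<in> G \<Longrightarrow> innerP P g (h - f) = 0"
  shows "projP P f G = h"
proof -
  have nonneg: "innerP P w w \<ge> 0" for w
    using pos by (simp add: innerP_self_nonneg less_imp_le)
  have pyth: "innerP P (h' - f) (h' - f) = innerP P (h' - h) (h' - h) + innerP P (h - f) (h - f)"
    if "h' \<in> G" for h'
    using innerP_add_self_orthogonal[OF orth[OF F.subspace_diff[OF assms(2) that assms(3)]]]
    by simp
  show ?thesis
    unfolding projP_def
  proof (rule the_equality)
    have "normP P (h - f) \<le> normP P (h' - f)" if "h' \<in> G" for h'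
      unfolding normP_def using pyth[OF that] nonneg[of "h' - h"]
      by (intro real_sqrt_le_mono) linarith
    then show "h \<in> G \<and> (\<forall>h'\<in>G. normP P (h - f) \<le> normP P (h' - f))"
      using assms(3) by blast
  next
    fix h2 assume h2: "h2 \<in> G \<and> (\<forall>h'\<in>G. normP P (h2 - f) \<le> normP P (h' - f))"
    then have "normP P (h2 - f) \<le> normP P (h - f)"
      using assms(3) by blast
    then have "innerP P (h2 - f) (h2 - f) \<le> innerP P (h - f) (h - f)"
      unfolding normP_def by (simp only: real_sqrt_le_iff)
    then have "innerP P (h2 - h) (h2 - h) = 0"
      using pyth[of h2] h2 nonneg[of "h2 - h"] by linarith
    then show "h2 = h"
      using innerP_self_eq_0_iff[OF pos] by simp
  qed
qed

lemma normP_power2: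
  assumes "\<And>x. margX P x \<ge> 0"
  shows "(normP P f)\<^sup>2 = innerP P f f"
  using innerP_self_nonneg[OF assms] by (simp add: normP_def)

lemma lincombF_LambdaInv_orthogonal:
  assumes pos: "\<And>x. margX P x > 0" and "distinct bs" "independentF (set bs)"
    and "g \<in> spanF (set bs)"
  shows "innerP P g (lincombF (LambdaInv P bs *\<^sub>v innerP_vec P f bs) bs - f) = 0"
proof -
  let ?a = "innerP_vec P f bs" and ?n = "length bs"
  let ?c = "LambdaInv P bs *\<^sub>v ?a"
  have c: "?c \<in> carrier_vec ?n"
    by (rule mult_mat_vec_carrier[OF LambdaInv_carrier innerP_vec_carrier])
  have Lc: "LambdaF P bs *\<^sub>v ?c = ?a"
    by (rule LambdaF_mult_LambdaInv_vec[OF assms(1-3) innerP_vec_carrier])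
  have coeff: "innerP P (lincombF ?c bs) (bs ! j) = innerP P f (bs ! j)" if "j < ?n" for j
  proof -
    have "innerP P (lincombF ?c bs) (bs ! j) = (LambdaF P bs *\<^sub>v ?c) $ j"
      by (simp only: innerP_commute[of P "lincombF ?c bs"] LambdaF_mult_vec_nth[OF c that])
    also have "\<dots> = innerP P f (bs ! j)"
      using Lc that by (simp add: innerP_vec_def)
    finally show ?thesis .
  qed
  have "innerP P b (lincombF ?c bs - f) = 0" if b: "b \<in> set bs" for b
  proof -
    obtain j where j: "j < ?n" "bs ! j = b"
      using b by (auto simp: in_set_conv_nth)
    have "innerP P b (lincombF ?c bs - f) = innerP P (lincombF ?c bs) b - innerP P f b"
      by (simp only: innerP_commute[of P b] innerP_diff_left)
    then show ?thesis
      using coeff[OF j(1)] j(2) by simp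
  qed
  then show ?thesis
    using assms(4) by (rule innerP_orthogonal_spanF)
qed

lemma projP_spanF:
  assumes "\<And>x. margX P x > 0" "distinct bs" "independentF (set bs)"
  shows "projP P f (spanF (set bs)) = lincombF (LambdaInv P bs *\<^sub>v innerP_vec P f bs) bs"
  by (rule projP_eqI[OF assms(1) F.subspace_span lincombF_in_spanF
        lincombF_LambdaInv_orthogonal[OF assms]])

lemma innerP_projP_spanF_self:
  assumes "\<And>x. margX P x > 0" "distinct bs" "independentF (set bs)"
  shows "innerP P (projP P f (spanF (set bs))) (projP P f (spanF (set bs)))
    = innerP_vec P f bs \<bullet> (LambdaInv P bs *\<^sub>v innerP_vec P f bs)"
proof -
  let ?a = "innerP_vec P f bs" and ?n = "length bs"
  let ?c = "LambdaInv P bs *\<^sub>v ?a"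
  have a: "?a \<in> carrier_vec ?n"
    by (rule innerP_vec_carrier)
  have c: "?c \<in> carrier_vec ?n"
    by (rule mult_mat_vec_carrier[OF LambdaInv_carrier a])
  have "innerP P (projP P f (spanF (set bs))) (projP P f (spanF (set bs)))
      = ?c \<bullet> (LambdaF P bs *\<^sub>v ?c)"
    by (simp only: projP_spanF[OF assms(1-3)] innerP_lincombF_self[OF c])
  also have "\<dots> = ?c \<bullet> ?a"
    by (simp only: LambdaF_mult_LambdaInv_vec[OF assms(1-3) a])
  also have "\<dots> = ?a \<bullet> ?c"
    by (rule comm_scalar_prod[OF c a])
  finally show ?thesis .
qed

lemma projP_orthogonal:
  assumes pos: "\<And>x. margX P x > 0" and "subspaceF G"
  shows "projP P f G \<in> G" and "g \<in> G \<Longrightarrow> innerP P g (projP P f G) = innerP P g f"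
proof -
  obtain bs where bs: "distinct bs" "independentF (set bs)" "spanF (set bs) = G"
    using subspaceF_has_basis_list[OF assms(2)] by blast
  show "projP P f G \<in> G"
    using lincombF_in_spanF bs(3) projP_spanF[OF pos bs(1,2)] by metis
  show "innerP P g (projP P f G) = innerP P g f" if "g \<in> G"
    using lincombF_LambdaInv_orthogonal[OF pos bs(1,2), of g f] that
    by (simp add: bs(3)[symmetric] projP_spanF[OF pos bs(1,2)] innerP_commute[of P g]
        innerP_diff_left)
qed

lemma innerP_Cauchy_Schwarz_div:
  assumes pos: "\<And>x. margX P x > 0"
  shows "(innerP P u v)\<^sup>2 / innerP P v v \<le> innerP P u u"
proof -
  have nonneg: "innerP P w w \<ge> 0" for w
    by (rule innerP_self_nonneg) (simp add: pos less_imp_le)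
  show ?thesis
  proof (cases "v = 0")
    case True
    with nonneg[of u] show ?thesis
      by simp
  next
    case False
    then have "innerP P v v \<noteq> 0"
      using innerP_self_eq_0_iff[OF pos] by simp
    with nonneg[of v] have "innerP P v v > 0"
      by simp
    then show ?thesis
      using innerP_Cauchy_Schwarz[OF pos, of u v] by (simp add: divide_le_eq)
  qed
qed

locale rank_one_model =
  fixes P :: "'x::finite \<Rightarrow> 'y::finite \<Rightarrow> real"
    and \<rho> :: real and fstar :: "'x \<Rightarrow> real" and gstar :: "'y \<Rightarrow> real"
  assumes margX_pos: "\<And>x. margX P x > 0"
    and decomp: "\<And>x y. P x y = margX P x * margY P y * (1 + \<rho> * fstar x * gstar y)"
    and gstar_norm: "ExpY P (\<lambda>y. (gstar y)\<^sup>2) = 1"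
begin

lemma sum_joint_mult:
  "(\<Sum>x\<in>UNIV. P x y * f x) = margY P y * (ExpX P f + \<rho> * gstar y * innerP P fstar f)"
proof -
  have "(\<Sum>x\<in>UNIV. P x y * f x) = (\<Sum>x\<in>UNIV. margY P y * (margX P x * f x)
      + margY P y * (\<rho> * gstar y) * (margX P x * (fstar x * f x)))"
    by (rule sum.cong[OF refl], subst decomp) (simp add: algebra_simps)
  also have "\<dots> = margY P y * ExpX P f + margY P y * (\<rho> * gstar y) * innerP P fstar f"
    by (simp add: sum.distrib ExpX_def innerP_eq_sum sum_distrib_left)
  finally show ?thesis
    by (simp add: algebra_simps)
qed

lemma condMean_eq:
  assumes "margY P y \<noteq> 0"
  shows "condMean P fs y = (\<rho> * gstar y) \<cdot>\<^sub>v innerP_vec P fstar fs"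
proof -
  have centred: "(\<Sum>x\<in>UNIV. P x y * (f x - ExpX P f)) = margY P y * (\<rho> * gstar y * innerP P fstar f)"
    for f
  proof -
    have "(\<Sum>x\<in>UNIV. P x y * (f x - ExpX P f)) = (\<Sum>x\<in>UNIV. P x y * f x) - margY P y * ExpX P f"
      by (simp add: right_diff_distrib sum_subtractf sum_distrib_right margY_def)
    also have "\<dots> = margY P y * (\<rho> * gstar y * innerP P fstar f)"
      unfolding sum_joint_mult by (simp add: algebra_simps)
    finally show ?thesis .
  qed
  show ?thesis
    by (rule eq_vecI) (simp_all add: condMean_def condE_def innerP_vec_def centred assms)
qed

lemma Hscore_eq:
  "Hscore P fs = \<rho>\<^sup>2 / 2 * (innerP_vec P fstar fs \<bullet> (LambdaInv P fs *\<^sub>v innerP_vec P fstar fs))"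
proof -
  let ?a = "innerP_vec P fstar fs" and ?L = "LambdaInv P fs"
  have La: "?L *\<^sub>v ?a \<in> carrier_vec (length fs)"
    by (rule mult_mat_vec_carrier[OF LambdaInv_carrier innerP_vec_carrier])
  have "margY P y * (condMean P fs y \<bullet> (?L *\<^sub>v condMean P fs y))
      = \<rho>\<^sup>2 * (margY P y * (gstar y)\<^sup>2) * (?a \<bullet> (?L *\<^sub>v ?a))" for y
  proof (cases "margY P y = 0")
    case False
    then show ?thesis
      using La innerP_vec_carrier[of P fstar fs]
      by (simp add: condMean_eq mult_mat_vec[OF LambdaInv_carrier innerP_vec_carrier]
          power2_eq_square)
  qed simp
  then have "Hscore P fs = 1/2 * (\<Sum>y\<in>UNIV. \<rho>\<^sup>2 * (margY P y * (gstar y)\<^sup>2) * (?a \<bullet> (?L *\<^sub>v ?a)))"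
    unfolding Hscore_def ExpY_def by (simp only:)
  also have "\<dots> = \<rho>\<^sup>2 / 2 * (?a \<bullet> (?L *\<^sub>v ?a)) * ExpY P (\<lambda>y. (gstar y)\<^sup>2)"
    by (simp add: ExpY_def sum_distrib_left sum_distrib_right algebra_simps)
  finally show ?thesis
    using gstar_norm by simp
qed

text \<open>Both sides vanish for \<open>f = 0\<close>, the right one because \<open>x / 0 = 0\<close>.\<close>

lemma Hscore_single:
  "Hscore P [f] = \<rho>\<^sup>2 / 2 * ((innerP P fstar f)\<^sup>2 / innerP P f f)"
proof (cases "f = 0")
  case True
  then show ?thesis
    by (simp add: Hscore_eq innerP_vec_def innerP_commute[of P fstar 0] scalar_prod_def)
next
  case False
  let ?L = "LambdaInv P [f]"
  have "?L * LambdaF P [f] = 1\<^sub>m 1"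
    using LambdaF_LambdaInv(2)[OF margX_pos, of "[f]"] False by simp
  then have "?L $$ (0, 0) * innerP P f f = 1"
    using LambdaInv_carrier[of P "[f]"]
    by (auto simp: LambdaF_def innerP_def scalar_prod_def dest!: arg_cong[of _ _ "\<lambda>A. A $$ (0, 0)"])
  moreover have "innerP P f f \<noteq> 0"
    using False innerP_self_eq_0_iff[OF margX_pos] by simp
  ultimately have "?L $$ (0, 0) = 1 / innerP P f f"
    by (simp add: field_simps)
  then show ?thesis
    using LambdaInv_carrier[of P "[f]"]
    by (simp add: Hscore_eq innerP_vec_def scalar_prod_def power2_eq_square)
qed

lemma HscoreSub_eq:
  assumes "subspaceF G"
  shows "HscoreSub P G = \<rho>\<^sup>2 / 2 * innerP P (projP P fstar G) (projP P fstar G)"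
proof -
  define bs where "bs = (SOME bs. distinct bs \<and> independentF (set bs) \<and> spanF (set bs) = G)"
  have bs: "distinct bs" "independentF (set bs)" "spanF (set bs) = G"
    using someI_ex[OF subspaceF_has_basis_list[OF assms]] unfolding bs_def by blast+
  have "HscoreSub P G = Hscore P bs"
    unfolding HscoreSub_def bs_def ..
  also have "\<dots> = \<rho>\<^sup>2 / 2 * (innerP_vec P fstar bs \<bullet> (LambdaInv P bs *\<^sub>v innerP_vec P fstar bs))"
    by (rule Hscore_eq)
  also have "\<dots> = \<rho>\<^sup>2 / 2 * innerP P (projP P fstar G) (projP P fstar G)"
    unfolding bs(3)[symmetric] innerP_projP_spanF_self[OF margX_pos bs(1,2)] ..
  finally show ?thesis .
qed

lemma Hscore_single_subspace:
  assumes "subspaceF G" "f \<in> G"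
  shows "Hscore P [f] = \<rho>\<^sup>2 / 2 * ((innerP P (projP P fstar G) f)\<^sup>2 / innerP P f f)"
proof -
  have "innerP P (projP P fstar G) f = innerP P fstar f"
    using projP_orthogonal(2)[OF margX_pos assms, of fstar] by (simp only: innerP_commute[of P f])
  then show ?thesis
    by (simp add: Hscore_single)
qed

lemma Hscore_single_le_HscoreSub:
  assumes "subspaceF G" "f \<in> G"
  shows "Hscore P [f] \<le> HscoreSub P G"
  unfolding Hscore_single_subspace[OF assms] HscoreSub_eq[OF assms(1)]
  by (rule mult_left_mono[OF innerP_Cauchy_Schwarz_div[OF margX_pos]]) simp

lemma Hscore_projP_eq_HscoreSub:
  assumes "subspaceF G"
  shows "Hscore P [projP P fstar G] = HscoreSub P G"
  unfolding Hscore_single_subspace[OF assms projP_orthogonal(1)[OF margX_pos assms]]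
    HscoreSub_eq[OF assms]
  by (cases "innerP P (projP P fstar G) (projP P fstar G) = 0") (simp_all add: power2_eq_square)

end

theorem proposition3:
  fixes P :: "'x::finite \<Rightarrow> 'y::finite \<Rightarrow> real"
    and \<rho> :: real and fstar :: "'x \<Rightarrow> real" and gstar :: "'y \<Rightarrow> real"
    and G :: "('x \<Rightarrow> real) set"
  assumes two: "CARD('y) = 2"
    and nonneg: "\<And>x y. P x y \<ge> 0"
    and total: "(\<Sum>x\<in>UNIV. \<Sum>y\<in>UNIV. P x y) = 1"
    and suppX: "\<And>x. margX P x > 0"
    and dep: "\<not> (\<forall>x y. P x y = margX P x * margY P y)"
    and rho_pos: "\<rho> > 0"
    and decomp: "\<And>x y. P x y = margX P x * margY P y * (1 + \<rho> * fstar x * gstar y)"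
    and fnorm: "ExpX P (\<lambda>x. (fstar x)\<^sup>2) = 1"
    and gnorm: "ExpY P (\<lambda>y. (gstar y)\<^sup>2) = 1"
    and sub: "subspaceF G"
    and nontriv: "G \<noteq> {0}"
  shows "HscoreSub P G = \<rho>\<^sup>2 / 2 * (normP P (projP P fstar G))\<^sup>2
       \<and> (\<forall>f\<in>G - {0}. Hscore P [f] \<le> HscoreSub P G)
       \<and> (\<exists>f\<in>G - {0}. Hscore P [f] = HscoreSub P G)
       \<and> HscoreSub P G = Hscore P [projP P fstar G]"
proof -
  interpret rank_one_model P \<rho> fstar gstar
    by (rule rank_one_model.intro) (fact suppX decomp gnorm)+
  have attained: "\<exists>f\<in>G - {0}. Hscore P [f] = HscoreSub P G"
  proof (cases "projP P fstar G = 0")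
    case True
    obtain f where f: "f \<in> G" "f \<noteq> 0"
      using nontriv F.subspace_0[OF sub] by blast
    have "Hscore P [f] = HscoreSub P G"
      by (simp add: Hscore_single_subspace[OF sub f(1)] HscoreSub_eq[OF sub] True)
    then show ?thesis
      using f by blast
  next
    case False
    then show ?thesis
      using projP_orthogonal(1)[OF suppX sub] Hscore_projP_eq_HscoreSub[OF sub] by blast
  qed
  show ?thesis
    by (intro conjI ballI attained Hscore_projP_eq_HscoreSub[OF sub, symmetric]
        Hscore_single_le_HscoreSub[OF sub])
      (simp_all add: HscoreSub_eq[OF sub] normP_power2 less_imp_le suppX)
qed

end
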